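(* Let $T:X\to Y$ be a linear mapping between finite-dimensional Euclidean spaces and let $C\subset X$ be a strictly convex cone with $\operatorname{Ker}T\cap\operatorname{int}C\neq\emptyset$. Define the multifunction $F:\operatorname{Im}T\rightrightarrows X$ by $F(v)=\{u\in X: Tu=v\}\cap C$. Then $F$ is lower semicontinuous at every non-zero point $v\in\operatorname{dom}F$. Moreover, if $T(C)$ is closed, then there exists $\tau>0$ such that $$T(C)\cap\bar B_Y\subset \tau\, T(C\cap\bar B_X).$$
   Context: $\bar B_X,\bar B_Y$ are closed unit balls. $\operatorname{dom}F=\{v:F(v)\ne\emptyset\}$. $F$ is lower semicontinuous at $\bar v\in\operatorname{dom}F$ if for every open $V\subset X$ with $F(\bar v)\cap V\neq\emptyset$ there is $\varepsilon>0$ with $F(v)\cap V\neq\emptyset$ for all $v\in\operatorname{Im}T$ with $\|v-\bar v\|<\varepsilon$. A cone is regular if pointed, closed, convex, with nonempty interior; a regular cone is strictly convex if every face other than the cone itself and $\{0\}$ has dimension one (a face being a convex $\mathcal F\subset C$ such that $x,y\in C$, $\lambda x+(1-\lambda)y\in\mathcal F$ for some $0<\lambda<1$ implies $x,y\in\mathcal F$). *)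

theory Defs
  imports "HOL-Analysis.Analysis"
begin

definition regular_cone :: "'a::euclidean_space set \<Rightarrow> bool" where
  "regular_cone C \<longleftrightarrow> cone C \<and> C \<inter> uminus ` C = {0} \<and> closed C \<and> convex C
     \<and> interior C \<noteq> {}"

definition strictly_convex_cone :: "'a::euclidean_space set \<Rightarrow> bool" where
  "strictly_convex_cone C \<longleftrightarrow> regular_cone C \<and>
     (\<forall>F. F face_of C \<and> F \<noteq> {} \<and> F \<noteq> C \<and> F \<noteq> {0} \<longrightarrow> aff_dim F = 1)"

definition lsc_at :: "'b::metric_space set \<Rightarrow> ('b \<Rightarrow> 'a::topological_space set) \<Rightarrow> 'b \<Rightarrow> bool" where
  "lsc_at D F vbar \<longleftrightarrow> (\<forall>V. open V \<and> F vbar \<inter> V \<noteq> {} \<longrightarrow>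
     (\<exists>\<epsilon>>0. \<forall>v\<in>D. dist v vbar < \<epsilon> \<longrightarrow> F v \<inter> V \<noteq> {}))"

end

theory Submission
  imports Defs
begin

text \<open>Adding a small multiple of k to
  a point of F(v) moves it into the interior of C without changing its image, and
  near an interior point the fibres of T can be followed continuously, because T is
  an open map onto its range. Likewise, a ball around k lies in C and its image
  under T is a neighbourhood of 0 in the range of T.\<close>

lemma linear_image_ball_contains_range_ball:
  fixes T :: "'a::euclidean_space \<Rightarrow> 'b::euclidean_space"
  assumes "linear T" and "d > 0"
  shows "\<exists>\<epsilon>>0. range T \<inter> ball (T u) \<epsilon> \<subseteq> T ` ball u d"
proof -
  obtain g where g: "linear g" and Tg: "\<And>v. v \<in> range T \<Longrightarrow> T (g v) = v"
    using linear_exists_right_inverse_on[OF assms(1) subspace_UNIV] by auto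
  obtain M where M: "M > 0" and gM: "\<And>v. norm (g v) \<le> M * norm v"
    using linear_bounded_pos[OF g] by blast
  have "range T \<inter> ball (T u) (d / M) \<subseteq> T ` ball u d"
  proof
    fix v assume v: "v \<in> range T \<inter> ball (T u) (d / M)"
    then obtain a where a: "v = T a" by auto
    have diff_range: "v - T u \<in> range T"
      using a linear_diff[OF assms(1)] by (metis rangeI)
    have "norm (g (v - T u)) < d"
    proof -
      have "norm (g (v - T u)) \<le> M * norm (v - T u)" by (rule gM)
      also have "\<dots> < M * (d / M)"
        using v M by (intro mult_strict_left_mono) (auto simp: dist_norm norm_minus_commute)
      finally show ?thesis using M by simp
    qed
    then have "u + g (v - T u) \<in> ball u d" by (simp add: dist_norm)
    moreover have "T (u + g (v - T u)) = v"
      using Tg[OF diff_range] linear_add[OF assms(1)] by simp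
    ultimately show "v \<in> T ` ball u d" by (metis image_eqI)
  qed
  then show ?thesis using assms(2) M by (intro exI[of _ "d / M"]) auto
qed

lemma cone_scaleR_interior:
  fixes C :: "'a::real_normed_vector set"
  assumes "cone C" and "s > 0" and "k \<in> interior C"
  shows "s *\<^sub>R k \<in> interior C"
proof -
  have "(*\<^sub>R) s ` interior C \<subseteq> interior C"
  proof (rule interior_maximal)
    show "(*\<^sub>R) s ` interior C \<subseteq> C"
      using assms(1,2) interior_subset[of C] mem_cone[of C] by fastforce
    show "open ((*\<^sub>R) s ` interior C)"
      using assms(2) by (intro open_scaling open_interior) simp
  qed
  then show ?thesis using assms(3) by blast
qed

lemma convex_cone_add_interior:
  fixes C :: "'a::real_normed_vector set"
  assumes "convex C" and "cone C" and "x \<in> C" and "k \<in> interior C"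
  shows "x + k \<in> interior C"
proof -
  have "(+) x ` C \<subseteq> C"
    using assms(1-3) convex_cone[of C] by blast
  then have "interior ((+) x ` C) \<subseteq> interior C"
    by (rule interior_mono)
  moreover have "x + k \<in> interior ((+) x ` C)"
    using assms(4) by (metis imageI interior_translation)
  ultimately show ?thesis by blast
qed

lemma lsc_at_linear_fibre_cone:
  fixes T :: "'a::euclidean_space \<Rightarrow> 'b::euclidean_space"
  assumes T: "linear T" and "convex C" and "cone C"
    and k: "T k = 0" "k \<in> interior C"
  shows "lsc_at (range T) (\<lambda>v. {u. T u = v} \<inter> C) v"
  unfolding lsc_at_def
proof (intro allI impI)
  fix V :: "'a set" assume V: "open V \<and> {u. T u = v} \<inter> C \<inter> V \<noteq> {}"
  then obtain u0 where u0: "u0 \<in> C" "T u0 = v" "u0 \<in> V" by auto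
  obtain e where e: "e > 0" "ball u0 e \<subseteq> V"
    using V u0(3) open_contains_ball by blast
  have nk: "norm k + 1 > 0" by (simp add: add_nonneg_pos)
  define s where "s = e / (norm k + 1)"
  have s: "s > 0" using e nk by (simp add: s_def)
  define u1 where "u1 = u0 + s *\<^sub>R k"
  have "norm (s *\<^sub>R k) = s * norm k" using s by simp
  also have "\<dots> < s * (norm k + 1)" using s by simp
  also have "\<dots> = e" using nk by (simp add: s_def)
  finally have "norm (s *\<^sub>R k) < e" .
  then have "u1 \<in> V" using e by (auto simp: u1_def dist_norm)
  moreover have "u1 \<in> interior C"
    unfolding u1_def
    using convex_cone_add_interior cone_scaleR_interior assms(2,3) u0(1) s k(2) by blast
  ultimately obtain d where d: "d > 0" "ball u1 d \<subseteq> interior C \<inter> V"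
    using V open_contains_ball[of "interior C \<inter> V"] by blast
  have Tu1: "T u1 = v"
    using u0(2) k(1) linear_add[OF T] linear_scale[OF T] by (simp add: u1_def)
  obtain \<epsilon> where \<epsilon>: "\<epsilon> > 0" "range T \<inter> ball v \<epsilon> \<subseteq> T ` ball u1 d"
    using linear_image_ball_contains_range_ball[OF T d(1), of u1] Tu1 by blast
  show "\<exists>\<epsilon>>0. \<forall>v'\<in>range T. dist v' v < \<epsilon> \<longrightarrow> {u. T u = v'} \<inter> C \<inter> V \<noteq> {}"
  proof (intro exI[of _ \<epsilon>] conjI ballI impI)
    fix v' assume "v' \<in> range T" "dist v' v < \<epsilon>"
    then have "v' \<in> T ` ball u1 d"
      using \<epsilon>(2) by (auto simp: dist_commute)
    then obtain u' where "u' \<in> ball u1 d" "T u' = v'"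
      by (metis imageE)
    then show "{u. T u = v'} \<inter> C \<inter> V \<noteq> {}"
      using d(2) interior_subset by blast
  qed (rule \<epsilon>(1))
qed

lemma range_unit_ball_scaled_image_cone:
  fixes T :: "'a::euclidean_space \<Rightarrow> 'b::euclidean_space"
  assumes T: "linear T" and "cone C" and k: "T k = 0" "k \<in> interior C"
  shows "\<exists>\<tau>>0. range T \<inter> cball 0 1 \<subseteq> (\<lambda>y. \<tau> *\<^sub>R y) ` T ` (C \<inter> cball 0 1)"
proof -
  obtain r where r: "r > 0" "ball k r \<subseteq> C"
    using k(2) by (meson mem_interior)
  obtain \<epsilon> where \<epsilon>: "\<epsilon> > 0" "range T \<inter> ball 0 \<epsilon> \<subseteq> T ` ball k r"
    using linear_image_ball_contains_range_ball[OF T r(1), of k] k(1) by auto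
  define c where "c = norm k + r"
  have c: "c > 0" using r by (simp add: c_def add_nonneg_pos)
  have "range T \<inter> cball 0 1 \<subseteq> (\<lambda>y. (2 * c / \<epsilon>) *\<^sub>R y) ` T ` (C \<inter> cball 0 1)"
  proof
    fix y assume y: "y \<in> range T \<inter> cball 0 1"
    then obtain a where a: "y = T a" by auto
    have "(\<epsilon> / 2) *\<^sub>R y \<in> range T"
      using a linear_scale[OF T] by (metis rangeI)
    moreover have "norm ((\<epsilon> / 2) *\<^sub>R y) < \<epsilon>"
      using y \<epsilon>(1) by auto
    ultimately have "(\<epsilon> / 2) *\<^sub>R y \<in> range T \<inter> ball 0 \<epsilon>"
      by (simp add: dist_norm)
    then have "(\<epsilon> / 2) *\<^sub>R y \<in> T ` ball k r"
      using \<epsilon>(2) by blast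
    then obtain u where u: "u \<in> ball k r" "T u = (\<epsilon> / 2) *\<^sub>R y"
      by (metis imageE)
    have "norm u \<le> c"
      using u(1) norm_triangle_sub[of u k] by (auto simp: c_def dist_norm norm_minus_commute)
    then have "(1 / c) *\<^sub>R u \<in> C \<inter> cball 0 1"
      using u(1) r(2) c assms(2) by (auto simp: cone_def field_simps)
    moreover have "y = (2 * c / \<epsilon>) *\<^sub>R T ((1 / c) *\<^sub>R u)"
      using u(2) c \<epsilon>(1) linear_scale[OF T] by simp
    ultimately show "y \<in> (\<lambda>y. (2 * c / \<epsilon>) *\<^sub>R y) ` T ` (C \<inter> cball 0 1)" by blast
  qed
  then show ?thesis using c \<epsilon>(1) by (intro exI[of _ "2 * c / \<epsilon>"]) auto
qed

theorem lemma2: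
  fixes T :: "'a::euclidean_space \<Rightarrow> 'b::euclidean_space"
    and C :: "'a set"
    and F :: "'b \<Rightarrow> 'a set"
  assumes "linear T"
    and "strictly_convex_cone C"
    and "{x. T x = 0} \<inter> interior C \<noteq> {}"
    and F_def: "F = (\<lambda>v. {u. T u = v} \<inter> C)"
  shows "(\<forall>v\<in>range T. v \<noteq> 0 \<and> F v \<noteq> {} \<longrightarrow> lsc_at (range T) F v)
    \<and> (closed (T ` C) \<longrightarrow>
         (\<exists>\<tau>>0. T ` C \<inter> cball 0 1 \<subseteq> (\<lambda>y. \<tau> *\<^sub>R y) ` (T ` (C \<inter> cball 0 1))))"
proof -
  have "cone C" "convex C"
    using assms(2) by (auto simp: strictly_convex_cone_def regular_cone_def)
  obtain k where k: "T k = 0" "k \<in> interior C"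
    using assms(3) by blast
  have "lsc_at (range T) F v" for v
    using lsc_at_linear_fibre_cone[OF assms(1) \<open>convex C\<close> \<open>cone C\<close> k] F_def by simp
  moreover obtain \<tau> where "\<tau> > 0"
    "range T \<inter> cball 0 1 \<subseteq> (\<lambda>y. \<tau> *\<^sub>R y) ` T ` (C \<inter> cball 0 1)"
    using range_unit_ball_scaled_image_cone[OF assms(1) \<open>cone C\<close> k] by blast
  then have "\<exists>\<tau>>0. T ` C \<inter> cball 0 1 \<subseteq> (\<lambda>y. \<tau> *\<^sub>R y) ` (T ` (C \<inter> cball 0 1))"
    by blast
  ultimately show ?thesis by blast
qed

end
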